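(* Let $\mathcal X=\{1,\dots,N\}$ with $N\ge2$, let $0<\alpha<1$ and $0\le\varepsilon\le1-\frac1N$. Let $p,q$ be probability distributions on $\mathcal X$ with $p(x)>0$ for all $x$, let $u$ be the uniform distribution on $\mathcal X$, let $y\in\mathcal X$, and let $p'=U_{\alpha,\varepsilon}(p,y)$. Then \[ \log\frac1{p(y)}-\log\frac1{q(y)}\le \frac1{\log\frac1\alpha}\Big[D(q\parallel p)-D(q\parallel p')+\log\frac1{1-\varepsilon}\Big]+N\Big[D(u\parallel p)-D(u\parallel p')+\log\frac1{(1-\varepsilon)\alpha}\Big]. \]
   Context: All logarithms are natural, with $\log\frac10=+\infty$. For a distribution $p$ on $\mathcal X$, a letter $y$, $0<\alpha<1$ and $0\le\varepsilon\le1-\frac1N$, the update $U_{\alpha,\varepsilon}(p,y)$ is the distribution $p'$ with $p'(x)=\alpha p(x)+(1-\alpha)(1-\varepsilon)$ if $x=y$ and $p'(x)=\alpha p(x)+(1-\alpha)\frac{\varepsilon}{N-1}$ if $x\neq y$. For distributions $q,r$ with $r(x)>0$ for all $x$, $D(q\parallel r)=\sum_{x:\,q(x)>0}q(x)\log\frac{q(x)}{r(x)}$. *)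

theory Defs
  imports Complex_Main "HOL-Library.Extended_Real"
begin

text \<open>Alphabet X = {1..N}; distributions are functions nat => real, only values on {1..N} matter.\<close>

definition is_dist :: "nat \<Rightarrow> (nat \<Rightarrow> real) \<Rightarrow> bool" where
  "is_dist N p \<longleftrightarrow> (\<forall>x\<in>{1..N}. 0 \<le> p x) \<and> (\<Sum>x\<in>{1..N}. p x) = 1"

definition uniform_dist :: "nat \<Rightarrow> nat \<Rightarrow> real" where
  "uniform_dist N = (\<lambda>x. 1 / real N)"

definition upd :: "nat \<Rightarrow> real \<Rightarrow> real \<Rightarrow> (nat \<Rightarrow> real) \<Rightarrow> nat \<Rightarrow> nat \<Rightarrow> real" where
  "upd N \<alpha> \<epsilon> p y = (\<lambda>x. if x = y then \<alpha> * p x + (1 - \<alpha>) * (1 - \<epsilon>)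
                          else \<alpha> * p x + (1 - \<alpha>) * (\<epsilon> / (real N - 1)))"

definition KL :: "nat \<Rightarrow> (nat \<Rightarrow> real) \<Rightarrow> (nat \<Rightarrow> real) \<Rightarrow> real" where
  "KL N q r = (\<Sum>x\<in>{x\<in>{1..N}. 0 < q x}. q x * ln (q x / r x))"

definition log_inv :: "real \<Rightarrow> ereal" where
  "log_inv t = (if t = 0 then \<infinity> else ereal (ln (1 / t)))"

end

theory Submission
  imports Defs
begin

text \<open>Since \<open>p'\<close> mixes \<open>p\<close> with a distribution, \<open>p'(x) \<ge> \<alpha> p(x)\<close> everywhere,
  while at the observed letter \<open>p'(y)/p(y) = A := \<alpha> + (1-\<alpha>)(1-\<epsilon>)/p(y)\<close>. Writing
  \<open>D(r\<parallel>p) - D(r\<parallel>p') = \<Sum> r(x) log(p'(x)/p(x))\<close> therefore gives, for every distribution \<open>r\<close>,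
  \<open>D(r\<parallel>p) - D(r\<parallel>p') \<ge> r(y) log A + (1 - r(y)) log \<alpha>\<close>. Applied to \<open>q\<close> and \<open>u\<close>, this reduces
  the claim to an inequality between the four reals \<open>\<alpha>, 1-\<epsilon>, p(y), q(y)\<close>, which follows
  from \<open>log t \<le> t - 1\<close> after distinguishing \<open>A \<ge> 1\<close> and \<open>A < 1\<close>.\<close>

lemma is_dist_nonneg: "is_dist N r \<Longrightarrow> x \<in> {1..N} \<Longrightarrow> 0 \<le> r x"
  by (simp add: is_dist_def)

lemma is_dist_le_one:
  assumes "is_dist N r" and "x \<in> {1..N}"
  shows "r x \<le> 1"
proof -
  have "r x \<le> (\<Sum>z\<in>{1..N}. r z)"
    using assms by (intro member_le_sum) (auto intro: is_dist_nonneg)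
  then show ?thesis using assms(1) by (simp add: is_dist_def)
qed

lemma is_dist_uniform: "1 \<le> N \<Longrightarrow> is_dist N (uniform_dist N)"
  by (simp add: is_dist_def uniform_dist_def)

lemma sum_support_is_dist:
  assumes "is_dist N r"
  shows "(\<Sum>x\<in>{x\<in>{1..N}. 0 < r x}. r x) = 1"
proof -
  have "(\<Sum>x\<in>{x\<in>{1..N}. 0 < r x}. r x) = (\<Sum>x\<in>{1..N}. if 0 < r x then r x else 0)"
    by (rule sum.inter_filter) simp
  also have "\<dots> = (\<Sum>x\<in>{1..N}. r x)"
    using is_dist_nonneg[OF assms] by (intro sum.cong) (auto simp: order_le_less)
  finally show ?thesis using assms by (simp add: is_dist_def)
qed

lemma KL_diff_eq_sum_ln_ratio:
  assumes "\<forall>x\<in>{1..N}. 0 < p x" and "\<forall>x\<in>{1..N}. 0 < p' x"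
  shows "KL N r p - KL N r p' = (\<Sum>x\<in>{x\<in>{1..N}. 0 < r x}. r x * ln (p' x / p x))"
  unfolding KL_def sum_subtractf[symmetric]
proof (rule sum.cong)
  fix x assume "x \<in> {x\<in>{1..N}. 0 < r x}"
  moreover from this have "0 < p x" "0 < p' x" using assms by auto
  ultimately show "r x * ln (r x / p x) - r x * ln (r x / p' x) = r x * ln (p' x / p x)"
    by (simp add: ln_div algebra_simps)
qed simp

lemma KL_diff_ge:
  assumes r: "is_dist N r" and y: "y \<in> {1..N}" and "0 < \<alpha>"
    and p: "\<forall>x\<in>{1..N}. 0 < p x" and p': "\<forall>x\<in>{1..N}. 0 < p' x"
    and ratio: "\<forall>x\<in>{1..N}. \<alpha> * p x \<le> p' x"
  shows "r y * ln (p' y / p y) + (1 - r y) * ln \<alpha> \<le> KL N r p - KL N r p'"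
proof -
  define S where "S = {x\<in>{1..N}. 0 < r x}"
  define d where "d = ln (p' y / p y) - ln \<alpha>"
  have "(\<Sum>x\<in>S. r x * ln \<alpha> + (if x = y then r x * d else 0)) \<le> (\<Sum>x\<in>S. r x * ln (p' x / p x))"
  proof (rule sum_mono)
    fix x assume "x \<in> S"
    then have x: "x \<in> {1..N}" and "0 < r x" by (auto simp: S_def)
    moreover have "\<alpha> \<le> p' x / p x"
      using p ratio x by (simp add: le_divide_eq mult.commute)
    then have "ln \<alpha> \<le> ln (p' x / p x)" using \<open>0 < \<alpha>\<close> by simp
    ultimately show "r x * ln \<alpha> + (if x = y then r x * d else 0) \<le> r x * ln (p' x / p x)"
      by (auto simp: d_def algebra_simps)
  qed
  moreover have "(\<Sum>x\<in>S. if x = y then r x * d else 0) = r y * d"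
    using y is_dist_nonneg[OF r y] by (auto simp: S_def)
  ultimately have "ln \<alpha> + r y * d \<le> (\<Sum>x\<in>S. r x * ln (p' x / p x))"
    using sum_support_is_dist[OF r]
    by (simp add: sum.distrib sum_distrib_right[symmetric] S_def)
  then show ?thesis
    unfolding KL_diff_eq_sum_ln_ratio[OF p p'] S_def[symmetric] d_def by (simp add: algebra_simps)
qed

lemma upd_ge_scaled:
  assumes "1 \<le> N" and "\<alpha> \<le> 1" and "0 \<le> \<epsilon>" and "\<epsilon> \<le> 1"
  shows "\<alpha> * p x \<le> upd N \<alpha> \<epsilon> p y x"
  using assms by (simp add: upd_def)

lemma upd_ratio_at_letter:
  assumes "0 < p y"
  shows "upd N \<alpha> \<epsilon> p y y / p y = \<alpha> + (1 - \<alpha>) * ((1 - \<epsilon>) / p y)"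
  using assms by (simp add: upd_def field_simps)

lemma mixture_ln_bound:
  fixes a t :: real
  assumes "0 < a" "a < 1" and "1 \<le> a + (1 - a) * t"
  shows "a * t \<le> (a + (1 - a) * t) * (1 + ln (a + (1 - a) * t) / ln (1 / a))"
proof -
  define A where "A = a + (1 - a) * t"
  define L where "L = ln (1 / a)"
  have "0 < L" using assms by (simp add: L_def)
  have "A - 1 \<le> A * ln A"
    using ln_le_minus_one[of "1 / A"] assms by (simp add: A_def ln_div field_simps)
  moreover have "a * (t - 1) \<le> (A - 1) / L"
  proof -
    have "L \<le> (1 - a) / a"
      using ln_le_minus_one[of "1 / a"] assms by (simp add: L_def field_simps)
    then have "(A - 1) / ((1 - a) / a) \<le> (A - 1) / L"
      using assms \<open>0 < L\<close> by (intro divide_left_mono) (auto simp: A_def)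
    moreover have "(A - 1) / ((1 - a) / a) = a * (t - 1)"
      using assms by (simp add: A_def field_simps)
    ultimately show ?thesis by simp
  qed
  ultimately have "a * (t - 1) \<le> A * ln A / L"
    using \<open>0 < L\<close> by (smt (verit) divide_right_mono)
  moreover have "A * (1 + ln A / L) = A + A * ln A / L" and "a * (t - 1) = a * t - a"
    by (simp_all add: algebra_simps)
  ultimately show ?thesis
    using assms unfolding A_def[symmetric] L_def[symmetric] by linarith
qed

lemma ln_gap_le_mixture_bound:
  fixes a c p q n :: real
  assumes a: "0 < a" "a < 1" and c: "0 < c" "c \<le> 1" and p: "0 < p" "p \<le> 1"
    and q: "0 < q" "q \<le> 1" and n: "1 \<le> n"
  defines "A \<equiv> a + (1 - a) * (c / p)" and "L \<equiv> ln (1 / a)"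
  shows "ln q - ln p \<le> (q * ln A - (1 - q) * L - ln c) / L + ln A + L - n * ln c"
proof -
  have "0 < L" using a by (simp add: L_def)
  have "ln c \<le> 0" using c by simp
  then have "n * ln c \<le> ln c" and "0 \<le> - ln c / L"
    using mult_right_mono_neg[OF n] \<open>0 < L\<close> by (auto simp: divide_nonpos_pos)
  have "0 < A" using a c p by (simp add: A_def add_pos_nonneg)
  have ln_q: "ln q \<le> q - 1" using q by (intro ln_le_minus_one) simp
  consider (grow) "1 \<le> A" | (shrink) "A < 1" by linarith
  then show ?thesis
  proof cases
    case grow
    txt \<open>\<open>s q - 1\<close> is the \<open>q\<close>-dependent part of the bound, and \<open>ln (s q) \<le> s q - 1\<close>.\<close>
    define s where "s = 1 + ln A / L"
    have "1 \<le> s" using grow \<open>0 < L\<close> by (simp add: s_def)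
    have "a * (c / p) \<le> A * s"
      using mixture_ln_bound[of a "c / p"] a grow by (simp add: A_def L_def s_def)
    then have "ln (a * (c / p)) \<le> ln (A * s)"
      using a c p by (intro ln_mono) auto
    then have "- ln p - ln s \<le> ln A + L - ln c"
      using a c p \<open>0 < A\<close> \<open>1 \<le> s\<close> by (simp add: L_def ln_mult ln_div)
    moreover have "ln (s * q) \<le> s * q - 1"
      using \<open>1 \<le> s\<close> q by (intro ln_le_minus_one) simp
    then have "ln q \<le> s * q - 1 - ln s"
      using \<open>1 \<le> s\<close> q by (simp add: ln_mult)
    moreover have "s * q - 1 = (q * ln A - (1 - q) * L - ln c) / L + ln c / L"
      using \<open>0 < L\<close> by (simp add: s_def field_simps)
    ultimately show ?thesis
      using \<open>n * ln c \<le> ln c\<close> \<open>0 \<le> - ln c / L\<close> by simp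
  next
    case shrink
    have "c < p"
    proof (rule ccontr)
      assume "\<not> c < p"
      then have "1 \<le> c / p" using p by simp
      then have "1 \<le> A" using a unfolding A_def by (smt (verit) mult_le_cancel_left1)
      then show False using shrink by simp
    qed
    then have "a * c \<le> a * p" using a by simp
    moreover have "A * p = a * p + (1 - a) * c" using p by (simp add: A_def field_simps)
    ultimately have "c \<le> A * p" by (simp add: algebra_simps)
    then have "ln c \<le> ln (A * p)" using c by (intro ln_mono) auto
    then have "ln c \<le> ln A + ln p" using p \<open>0 < A\<close> by (simp add: ln_mult)
    then have "- ln p \<le> ln A - ln c" by simp
    have "c \<le> A"
    proof -
      have "(1 - a) * c \<le> (1 - a) * (c / p)"
        using a c p by (intro mult_left_mono) (simp_all add: le_divide_eq mult_left_le)
      moreover have "a * c \<le> a" using a c by (simp add: mult_left_le)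
      ultimately show ?thesis by (simp add: A_def algebra_simps)
    qed
    then have "0 \<le> (ln A - ln c) / L" using c \<open>0 < L\<close> by simp
    moreover have "ln A \<le> q * ln A" using shrink \<open>0 < A\<close> q
      by (simp add: mult_le_cancel_right1)
    ultimately have "q - 1 \<le> (q * ln A - (1 - q) * L - ln c) / L"
      using \<open>0 < L\<close> by (simp add: field_simps)
    then show ?thesis
      using \<open>- ln p \<le> ln A - ln c\<close> ln_q \<open>n * ln c \<le> ln c\<close> \<open>0 < L\<close> by linarith
  qed
qed

lemma ln_gap_le_KL_bound:
  fixes N :: nat and \<alpha> \<epsilon> :: real and p q :: "nat \<Rightarrow> real" and y :: nat
  assumes N: "N \<ge> 2" and \<alpha>: "0 < \<alpha>" "\<alpha> < 1"
    and \<epsilon>: "0 \<le> \<epsilon>" "\<epsilon> \<le> 1 - 1 / real N"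
    and p: "is_dist N p" "\<forall>x\<in>{1..N}. 0 < p x" and q: "is_dist N q" "0 < q y"
    and y: "y \<in> {1..N}"
  defines "p' \<equiv> upd N \<alpha> \<epsilon> p y" and "u \<equiv> uniform_dist N"
  shows "ln (q y) - ln (p y) \<le>
    (1 / ln (1 / \<alpha>)) * (KL N q p - KL N q p' + ln (1 / (1 - \<epsilon>)))
      + real N * (KL N u p - KL N u p' + ln (1 / ((1 - \<epsilon>) * \<alpha>)))"
proof -
  define c where "c = 1 - \<epsilon>"
  define A where "A = \<alpha> + (1 - \<alpha>) * (c / p y)"
  define L where "L = ln (1 / \<alpha>)"
  have "0 < L" and ln_\<alpha>: "ln \<alpha> = - L" using \<alpha> by (simp_all add: L_def ln_div)
  have "0 < 1 / real N" using N by simp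
  then have c: "0 < c" "c \<le> 1" using \<epsilon> unfolding c_def by linarith+
  have "0 < p y" using p y by blast
  have p'_ge: "\<forall>x\<in>{1..N}. \<alpha> * p x \<le> p' x"
    using N \<alpha> \<epsilon> c by (simp add: p'_def upd_ge_scaled c_def)
  have p'_pos: "\<forall>x\<in>{1..N}. 0 < p' x"
    using p'_ge p \<alpha> by (smt (verit) mult_pos_pos)
  have "p' y / p y = A"
    using upd_ratio_at_letter[of p y, OF \<open>0 < p y\<close>] by (simp add: p'_def A_def c_def)
  then have KL_gap: "r y * ln A + (1 - r y) * ln \<alpha> \<le> KL N r p - KL N r p'"
    if "is_dist N r" for r
    using KL_diff_ge[OF that y \<alpha>(1) p(2) p'_pos p'_ge] by simp
  have "(q y * ln A - (1 - q y) * L - ln c) / L \<le> (1 / L) * (KL N q p - KL N q p' + ln (1 / c))"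
    using KL_gap[OF q(1)] ln_\<alpha> \<open>0 < L\<close> c by (simp add: ln_div divide_right_mono)
  moreover have "ln A + L - real N * ln c \<le> real N * (KL N u p - KL N u p' + ln (1 / (c * \<alpha>)))"
  proof -
    have "ln A + L - real N * ln c
        = real N * ((1 / real N) * ln A + (1 - 1 / real N) * ln \<alpha> + ln (1 / (c * \<alpha>)))"
      using N c \<alpha> ln_\<alpha> by (simp add: ln_div ln_mult field_simps)
    also have "\<dots> \<le> real N * (KL N u p - KL N u p' + ln (1 / (c * \<alpha>)))"
      using KL_gap[OF is_dist_uniform] N by (intro mult_left_mono) (auto simp: u_def uniform_dist_def)
    finally show ?thesis .
  qed
  moreover have "ln (q y) - ln (p y) \<le> (q y * ln A - (1 - q y) * L - ln c) / L + ln A + L - real N * ln c"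
    using ln_gap_le_mixture_bound[OF \<alpha> c \<open>0 < p y\<close> is_dist_le_one[OF p(1) y] q(2)
        is_dist_le_one[OF q(1) y]] N
    by (simp add: A_def L_def)
  ultimately show ?thesis by (simp add: L_def c_def)
qed

theorem lemma2:
  fixes N :: nat and \<alpha> \<epsilon> :: real and p q :: "nat \<Rightarrow> real" and y :: nat
  assumes "N \<ge> 2"
    and "0 < \<alpha>" and "\<alpha> < 1"
    and "0 \<le> \<epsilon>" and "\<epsilon> \<le> 1 - 1 / real N"
    and "is_dist N p" and "is_dist N q"
    and "\<forall>x\<in>{1..N}. 0 < p x"
    and "y \<in> {1..N}"
  shows "log_inv (p y) - log_inv (q y) \<le>
    ereal ((1 / ln (1 / \<alpha>)) * (KL N q p - KL N q (upd N \<alpha> \<epsilon> p y) + ln (1 / (1 - \<epsilon>)))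
      + real N * (KL N (uniform_dist N) p - KL N (uniform_dist N) (upd N \<alpha> \<epsilon> p y)
                  + ln (1 / ((1 - \<epsilon>) * \<alpha>))))"
proof -
  have "0 < p y" using assms by blast
  consider "q y = 0" | "0 < q y"
    using is_dist_nonneg[of N q y] assms by fastforce
  then show ?thesis
  proof cases
    case 1
    then show ?thesis using \<open>0 < p y\<close> by (simp add: log_inv_def)
  next
    case 2
    with ln_gap_le_KL_bound[OF assms(1-6,8) assms(7) 2 assms(9)] \<open>0 < p y\<close>
    show ?thesis by (simp add: log_inv_def ln_div)
  qed
qed

end
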